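(* Let $k\ge 19$ be an integer and $n=6k$. There is no weakly-balanced permutation sequence of length $n$.
   Context: Let $n$ be a positive integer, $N$ a set of $n$ players and $[n]=\{1,\ldots,n\}$ a set of $n$ items. A permutation sequence of length $n$ is an ordered tuple $(\pi_1,\ldots,\pi_n)$ of bijections $\pi_t : N\to[n]$; on day $t$ player $i$ receives item $\pi_t(i)$. For $t\in[n]$ and $i\in N$, $Z_i^t$ is the multiset $\{\pi_1(i),\ldots,\pi_t(i)\}$, and for $j\in[t]$, $Z_i^t[j]$ is the $j$-th smallest element of $Z_i^t$ (counted with multiplicity). The sequence is called weakly-balanced if for every $t\in[n]$, every $i\in N$ and every $j\in[t]$: $Z_i^t[j]\le \lfloor jn/t+1\rfloor$. *)

theory Defs
  imports Complex_Main "HOL-Library.Multiset"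
begin

text \<open>A permutation sequence of length n on the player set N: P t is the
bijection of day t, written P t (t = 1..n), mapping N onto the items {1..n}.\<close>
definition perm_seq :: "'a set \<Rightarrow> nat \<Rightarrow> (nat \<Rightarrow> 'a \<Rightarrow> nat) \<Rightarrow> bool" where
  "perm_seq N n P \<longleftrightarrow> (\<forall>t\<in>{1..n}. bij_betw (P t) N {1..n})"

definition Zset :: "(nat \<Rightarrow> 'a \<Rightarrow> nat) \<Rightarrow> 'a \<Rightarrow> nat \<Rightarrow> nat multiset" where
  "Zset P i t = image_mset (\<lambda>s. P s i) (mset_set {1..t})"

text \<open>Z_i^t[j] = j-th smallest element (1-based, with multiplicity).\<close>
definition Zth :: "(nat \<Rightarrow> 'a \<Rightarrow> nat) \<Rightarrow> 'a \<Rightarrow> nat \<Rightarrow> nat \<Rightarrow> nat" where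
  "Zth P i t j = sorted_list_of_multiset (Zset P i t) ! (j - 1)"

definition weakly_balanced :: "'a set \<Rightarrow> nat \<Rightarrow> (nat \<Rightarrow> 'a \<Rightarrow> nat) \<Rightarrow> bool" where
  "weakly_balanced N n P \<longleftrightarrow> perm_seq N n P \<and>
     (\<forall>t\<in>{1..n}. \<forall>i\<in>N. \<forall>j\<in>{1..t}.
        real (Zth P i t j) \<le> of_int \<lfloor>real j * real n / real t + 1\<rfloor>)"

end

theory Submission
  imports Defs
begin

(* With L = n div 2 + 1, H = 2n div 3 + 1 and
   M = 3n div 4 + 1, weak balance forces every player to receive an item <= L on one of
   days 1-2, items <= H on two of days 1-3, and items <= L on two and items <= M on three
   of days 1-4.  A case check shows that then the weight
     [p1 <= L] + [p1 <= M] + [p2 <= L] + [p2 <= M] + [p3 <= H] + [p4 <= M]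
   of every player is at least 4.  Summed over all players it equals 2L + H + 3M, since on
   each day exactly v players receive an item <= v; but 2L + H + 3M <= 47n/12 + 6 < 4n
   once n > 72. *)

lemma sorted_nth_le_imp_length_filter:
  fixes xs :: "'a::linorder list"
  assumes "sorted xs" and "j < length xs" and "xs ! j \<le> v"
  shows "Suc j \<le> length (filter (\<lambda>x. x \<le> v) xs)"
proof -
  have "xs ! i \<le> v" if "i \<le> j" for i
    using sorted_nth_mono[OF assms(1) that assms(2)] assms(3) by (rule order_trans)
  then have "{0..j} \<subseteq> {i. i < length xs \<and> xs ! i \<le> v}"
    using assms(2) by auto
  then have "card {0..j} \<le> card {i. i < length xs \<and> xs ! i \<le> v}"
    by (intro card_mono) auto
  then show ?thesis
    by (simp add: length_filter_conv_card)
qed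

lemma size_Zset: "size (Zset P i t) = t"
  unfolding Zset_def by simp

lemma size_filter_Zset:
  "size (filter_mset (\<lambda>x. x \<le> v) (Zset P i t)) = card {s\<in>{1..t}. P s i \<le> v}"
  unfolding Zset_def by (simp add: filter_mset_image_mset)

lemma weakly_balanced_imp_card_days_le:
  assumes "weakly_balanced N n P" and "i \<in> N" and "t \<in> {1..n}" and "j \<in> {1..t}"
  shows "j \<le> card {s\<in>{1..t}. P s i \<le> j * n div t + 1}"
proof -
  define xs where "xs = sorted_list_of_multiset (Zset P i t)"
  have mset_xs: "mset xs = Zset P i t"
    by (simp add: xs_def)
  have "\<lfloor>real j * real n / real t + 1\<rfloor> = int (j * n div t + 1)"
    using floor_divide_of_nat_eq[of "j * n" t] by simp
  then have "xs ! (j - 1) \<le> j * n div t + 1"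
    using assms unfolding weakly_balanced_def Zth_def xs_def by fastforce
  moreover have "sorted xs" and "j - 1 < length xs"
    using assms(4) mset_xs size_Zset[of P i t] by (auto simp: xs_def simp flip: size_mset)
  ultimately have "Suc (j - 1) \<le> length (filter (\<lambda>x. x \<le> j * n div t + 1) xs)"
    by (intro sorted_nth_le_imp_length_filter)
  then have "j \<le> length (filter (\<lambda>x. x \<le> j * n div t + 1) xs)"
    using assms(4) by simp
  also have "\<dots> = card {s\<in>{1..t}. P s i \<le> j * n div t + 1}"
    by (metis mset_xs mset_filter size_mset size_filter_Zset)
  finally show ?thesis .
qed

lemma card_le_of_bij_betw_atLeastAtMost:
  assumes "bij_betw f A {1..n}" and "v \<le> n"
  shows "card {a\<in>A. f a \<le> v} = v"
proof -
  have "f ` {a\<in>A. f a \<le> v} = {1..v}"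
    using assms unfolding bij_betw_def by (fastforce simp: image_iff)
  then have "bij_betw f {a\<in>A. f a \<le> v} {1..v}"
    by (rule bij_betw_subset[OF assms(1), rotated]) auto
  then show ?thesis
    by (simp add: bij_betw_same_card)
qed

lemma four_le_weight:
  fixes p :: "nat \<Rightarrow> nat" and L H M :: nat
  assumes "L \<le> H" and "H \<le> M"
    and "1 \<le> card {s\<in>{1..2}. p s \<le> L}" and "2 \<le> card {s\<in>{1..3}. p s \<le> H}"
    and "2 \<le> card {s\<in>{1..4}. p s \<le> L}" and "3 \<le> card {s\<in>{1..4}. p s \<le> M}"
  shows "4 \<le> of_bool (p 1 \<le> L) + of_bool (p 1 \<le> M) + of_bool (p 2 \<le> L) + of_bool (p 2 \<le> M)
              + of_bool (p 3 \<le> H) + (of_bool (p 4 \<le> M) :: nat)"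
proof -
  have card_eq: "card {s\<in>{1..t}. Q s} = (\<Sum>s=1..t. of_bool (Q s))" for t and Q :: "nat \<Rightarrow> bool"
    by (simp add: Int_def)
  have "{1..2::nat} = {1,2}" "{1..3::nat} = {1,2,3}" "{1..4::nat} = {1,2,3,4}"
    by auto
  with assms show ?thesis
    unfolding card_eq by (simp add: of_bool_def split: if_split_asm)
qed

lemma weakly_balanced_imp_le_72:
  assumes "finite N" and "card N = n" and "weakly_balanced N n P"
  shows "n \<le> 72"
proof (rule ccontr)
  assume "\<not> n \<le> 72"
  define L where "L = n div 2 + 1"
  define H where "H = 2 * n div 3 + 1"
  define M where "M = 3 * n div 4 + 1"
  define weight where "weight i = of_bool (P 1 i \<le> L) + of_bool (P 1 i \<le> M)
    + of_bool (P 2 i \<le> L) + of_bool (P 2 i \<le> M) + of_bool (P 3 i \<le> H) + (of_bool (P 4 i \<le> M) :: nat)"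
    for i
  have days: "{1..4} \<subseteq> {1..n}"
    using \<open>\<not> n \<le> 72\<close> by auto
  have "4 \<le> weight i" if "i \<in> N" for i
  proof -
    have "j \<le> card {s\<in>{1..t}. P s i \<le> j * n div t + 1}" if "t \<in> {1..4}" "j \<in> {1..t}" for t j
      using weakly_balanced_imp_card_days_le[OF assms(3) \<open>i \<in> N\<close>] days that by blast
    from this[of 2 1] this[of 3 2] this[of 4 2] this[of 4 3] show ?thesis
      unfolding weight_def L_def H_def M_def by (intro four_le_weight) auto
  qed
  then have "4 * n \<le> (\<Sum>i\<in>N. weight i)"
    using sum_mono[of N "\<lambda>_. 4" weight] assms(2) by simp
  also have "\<dots> = 2 * L + H + 3 * M"
  proof -
    have "(\<Sum>i\<in>N. of_bool (P d i \<le> v)) = (v::nat)" if "d \<in> {1..4}" "v \<le> n" for d v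
      using card_le_of_bij_betw_atLeastAtMost[of "P d" N n v] assms(1,3) days that
      by (auto simp: weakly_balanced_def perm_seq_def Int_def)
    moreover have "L \<le> n" "H \<le> n" "M \<le> n"
      using \<open>\<not> n \<le> 72\<close> unfolding L_def H_def M_def by auto
    ultimately show ?thesis
      unfolding weight_def by (simp add: sum.distrib)
  qed
  also have "\<dots> < 4 * n"
  proof -
    have "2 * L \<le> n + 2" "3 * H \<le> 2 * n + 3" "4 * M \<le> 3 * n + 4"
      unfolding L_def H_def M_def by simp_all
    then show ?thesis
      using \<open>\<not> n \<le> 72\<close> by linarith
  qed
  finally show False
    by simp
qed

theorem mainTheorem7:
  fixes N :: "'a set" and k n :: nat
  assumes "k \<ge> 19" and "n = 6 * k" and "finite N" and "card N = n"
  shows "\<not> (\<exists>P. weakly_balanced N n P)"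
  using weakly_balanced_imp_le_72[OF assms(3,4)] assms(1,2) by auto

end
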